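(* Let $\Omega$ be a discrete filtered set and $(X_\Omega,\mathfrak{p}_\Omega,\underline{0}_\Omega)$ the universal $\Omega$-endless Riemann surface. For a holomorphic germ $\hat\varphi\in\mathscr{O}_{\mathbb{C},0}$, the following are equivalent: (i) $\hat\varphi$ is $\Omega$-continuable; (ii) the germ $\mathfrak{p}_\Omega^*\hat\varphi=\hat\varphi\circ\mathfrak{p}_\Omega\in\mathscr{O}_{X_\Omega,\underline0_\Omega}$ can be analytically continued along any path in $X_\Omega$; (iii) $\mathfrak{p}_\Omega^*\hat\varphi$ extends to a global holomorphic function on $X_\Omega$, i.e. to an element of $\Gamma(X_\Omega,\mathscr{O}_{X_\Omega})$.
   Context: A discrete filtered set (d.f.s.) is a family $\Omega=(\Omega_L)_{L\ge0}$ of finite subsets of $\mathbb{C}$ with $\Omega_{L_1}\subseteq\Omega_{L_2}$ for $L_1\le L_2$ and $\Omega_\delta=\emptyset$ for some $\delta>0$. Let $\mathcal{S}_\Omega=\{(\lambda,\omega)\mid\lambda\ge0,\ \omega\in\Omega_\lambda\}\subset\mathbb{R}\times\mathbb{C}$ and $\mathcal{M}_\Omega=(\mathbb{R}\times\mathbb{C})\setminus\overline{\mathcal{S}_\Omega}$. A Lipschitz path $\gamma$ with $\gamma(0)=0$ is $\Omega$-allowed if $(L(\gamma_{|t}),\gamma(t))\in\mathcal{M}_\Omega$ for all $t$ ($\gamma_{|t}$ = restriction to $[0,t]$, $L$ = length). A germ is $\Omega$-continuable if it can be analytically continued along every $\Omega$-allowed path. An $\Omega$-endless Riemann surface is a triple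 $(X,\mathfrak{p},\underline0)$ with $X$ a connected Riemann surface, $\mathfrak{p}:X\to\mathbb{C}$ a local biholomorphism, $\underline0\in\mathfrak{p}^{-1}(0)$, such that every $\Omega$-allowed path $[0,1]\to\mathbb{C}$ has a lift to $X$ starting at $\underline0$; morphisms are local biholomorphisms commuting with projections and preserving base points. The universal $\Omega$-endless Riemann surface $(X_\Omega,\mathfrak{p}_\Omega,\underline0_\Omega)$ is an initial object of this category (it exists, is unique up to isomorphism, and $X_\Omega$ is simply connected). *)

theory Defs
  imports "HOL-Complex_Analysis.Complex_Analysis"
begin

definition dfs :: "(real \<Rightarrow> complex set) \<Rightarrow> bool" where
  "dfs \<Omega> \<longleftrightarrow> (\<forall>L\<ge>0. finite (\<Omega> L))
      \<and> (\<forall>L1 L2. 0 \<le> L1 \<and> L1 \<le> L2 \<longrightarrow> \<Omega> L1 \<subseteq> \<Omega> L2)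
      \<and> (\<exists>\<delta>>0. \<Omega> \<delta> = {})"

definition S_set :: "(real \<Rightarrow> complex set) \<Rightarrow> (real \<times> complex) set" where
  "S_set \<Omega> = {(l, w). l \<ge> 0 \<and> w \<in> \<Omega> l}"

definition M_set :: "(real \<Rightarrow> complex set) \<Rightarrow> (real \<times> complex) set" where
  "M_set \<Omega> = UNIV - closure (S_set \<Omega>)"

definition path_len :: "(real \<Rightarrow> complex) \<Rightarrow> real \<Rightarrow> real \<Rightarrow> real" where
  "path_len \<gamma> a b = Sup {(\<Sum>i<n. norm (\<gamma> (s (Suc i)) - \<gamma> (s i))) | s n.
        s 0 = a \<and> s n = b \<and> (\<forall>i<n. s i \<le> s (Suc i))}"

definition allowed_path :: "(real \<Rightarrow> complex set) \<Rightarrow> (real \<Rightarrow> complex) \<Rightarrow> bool" where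
  "allowed_path \<Omega> \<gamma> \<longleftrightarrow> (\<exists>C. C-lipschitz_on {0..1} \<gamma>) \<and> \<gamma> 0 = 0
      \<and> (\<forall>t\<in>{0..1}. (path_len \<gamma> 0 t, \<gamma> t) \<in> M_set \<Omega>)"

text \<open>A connected Riemann surface X with a local biholomorphism p to C: the complex
  structure on X is the one pulled back by the local homeomorphism p.\<close>
definition riemann_surface_over_C :: "'a topology \<Rightarrow> ('a \<Rightarrow> complex) \<Rightarrow> bool" where
  "riemann_surface_over_C X p \<longleftrightarrow> Hausdorff_space X \<and> connected_space X
     \<and> topspace X \<noteq> {}
     \<and> (\<forall>x\<in>topspace X. \<exists>U. openin X U \<and> x \<in> U \<and> open (p ` U)
            \<and> homeomorphic_map (subtopology X U) (top_of_set (p ` U)) p)"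

definition holo_on_surface :: "'a topology \<Rightarrow> ('a \<Rightarrow> complex) \<Rightarrow> 'a set \<Rightarrow> ('a \<Rightarrow> complex) \<Rightarrow> bool" where
  "holo_on_surface X p W f \<longleftrightarrow> openin X W \<and>
     (\<forall>x\<in>W. \<exists>U. openin X U \<and> x \<in> U \<and> U \<subseteq> W \<and> open (p ` U) \<and> inj_on p U
            \<and> homeomorphic_map (subtopology X U) (top_of_set (p ` U)) p
            \<and> (f \<circ> inv_into U p) holomorphic_on (p ` U))"

definition same_germ :: "'a topology \<Rightarrow> 'a \<Rightarrow> ('a \<Rightarrow> complex) \<Rightarrow> ('a \<Rightarrow> complex) \<Rightarrow> bool" where
  "same_germ X x f g \<longleftrightarrow> (\<exists>W. openin X W \<and> x \<in> W \<and> (\<forall>y\<in>W. f y = g y))"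

definition continuable_along :: "'a topology \<Rightarrow> ('a \<Rightarrow> complex) \<Rightarrow> ('a \<Rightarrow> complex) \<Rightarrow> (real \<Rightarrow> 'a) \<Rightarrow> bool" where
  "continuable_along X p f0 \<Gamma> \<longleftrightarrow> (\<exists>U F.
      (\<forall>t\<in>{0..1}. \<Gamma> t \<in> U t \<and> holo_on_surface X p (U t) (F t))
    \<and> same_germ X (\<Gamma> 0) (F 0) f0
    \<and> (\<forall>t\<in>{0..1}. \<exists>\<epsilon>>0. \<forall>s\<in>{0..1}. \<bar>s - t\<bar> < \<epsilon> \<longrightarrow>
           \<Gamma> s \<in> U t \<and> same_germ X (\<Gamma> s) (F s) (F t)))"

text \<open>A germ at 0 in C (represented by a function holomorphic near 0) is Omega-continuable.\<close>
definition omega_continuable :: "(real \<Rightarrow> complex set) \<Rightarrow> (complex \<Rightarrow> complex) \<Rightarrow> bool" where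
  "omega_continuable \<Omega> \<phi> \<longleftrightarrow>
     (\<forall>\<gamma>. allowed_path \<Omega> \<gamma> \<longrightarrow> continuable_along euclidean id \<phi> \<gamma>)"

definition endless_surface :: "(real \<Rightarrow> complex set) \<Rightarrow> 'a topology \<Rightarrow> ('a \<Rightarrow> complex) \<Rightarrow> 'a \<Rightarrow> bool" where
  "endless_surface \<Omega> X p o0 \<longleftrightarrow> riemann_surface_over_C X p \<and> o0 \<in> topspace X \<and> p o0 = 0
     \<and> (\<forall>\<gamma>. allowed_path \<Omega> \<gamma> \<longrightarrow>
          (\<exists>\<Gamma>. continuous_map (top_of_set {0..1}) X \<Gamma> \<and> \<Gamma> 0 = o0
               \<and> (\<forall>t\<in>{0..1}. p (\<Gamma> t) = \<gamma> t)))"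

text \<open>Morphisms: maps commuting with projections and preserving base points which are
  local biholomorphisms (local homeomorphisms that are holomorphic in the charts p, q,
  i.e. whose chart expression q \<circ> f \<circ> p^-1 is holomorphic).\<close>
definition surface_morphism :: "'a topology \<Rightarrow> ('a \<Rightarrow> complex) \<Rightarrow> 'a \<Rightarrow> 'b topology \<Rightarrow> ('b \<Rightarrow> complex) \<Rightarrow> 'b \<Rightarrow> ('a \<Rightarrow> 'b) \<Rightarrow> bool" where
  "surface_morphism X p o0 Y q o1 f \<longleftrightarrow> continuous_map X Y f
     \<and> (\<forall>x\<in>topspace X. q (f x) = p x) \<and> f o0 = o1
     \<and> (\<forall>x\<in>topspace X. \<exists>U. openin X U \<and> x \<in> U \<and> openin Y (f ` U)
            \<and> homeomorphic_map (subtopology X U) (subtopology Y (f ` U)) f)"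

text \<open>Test objects are all Omega-endless
  Riemann surfaces whose underlying set is a subset of the type complex; since every
  connected Riemann surface has cardinality at most that of C, every Omega-endless
  Riemann surface is isomorphic to one of these, so this is initiality in the full category.\<close>
definition universal_endless :: "(real \<Rightarrow> complex set) \<Rightarrow> 'a topology \<Rightarrow> ('a \<Rightarrow> complex) \<Rightarrow> 'a \<Rightarrow> bool" where
  "universal_endless \<Omega> X p o0 \<longleftrightarrow> endless_surface \<Omega> X p o0
     \<and> (\<forall>(Y::complex topology) q o1. endless_surface \<Omega> Y q o1 \<longrightarrow>
          (\<exists>f. surface_morphism X p o0 Y q o1 f
              \<and> (\<forall>g. surface_morphism X p o0 Y q o1 g \<longrightarrow> (\<forall>x\<in>topspace X. g x = f x))))"

end

theory Submission
  imports Defs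
begin

text \<open>The space of all germs of holomorphic functions on \<open>\<complex>\<close> (the sheaf space of
  \<open>\<O>\<^sub>\<complex>\<close>), projected to base points, is a Riemann surface over \<open>\<complex>\<close>, and continuing
  \<open>\<phi>\<close> analytically along a path is the same as lifting the path to it. So if \<open>\<phi>\<close> is
  \<open>\<Omega>\<close>-continuable, the connected component of the germ of \<open>\<phi>\<close> at \<open>0\<close> is an
  \<open>\<Omega>\<close>-endless Riemann surface; universality gives a morphism from \<open>X\<^sub>\<Omega>\<close> into it,
  and composing with "value of the germ" yields the global extension of \<open>\<phi> \<circ> p\<close> (i \<Rightarrow> iii).
  A global function is continuable along every path (iii \<Rightarrow> ii), and a continuation along the
  lift of an allowed path projects to a continuation along the path itself (ii \<Rightarrow> i).\<close>

lemma inj_pack_nat_sets: "inj (\<lambda>A :: nat \<Rightarrow> nat set. {prod_encode (n, k) | n k. k \<in> A n})"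
proof (rule injI)
  fix A B :: "nat \<Rightarrow> nat set"
  assume eq: "{prod_encode (n, k) | n k. k \<in> A n} = {prod_encode (n, k) | n k. k \<in> B n}"
  have "k \<in> A n \<longleftrightarrow> k \<in> B n" for n k
    using eq[THEN equalityD1, THEN subsetD, of "prod_encode (n, k)"]
      eq[THEN equalityD2, THEN subsetD, of "prod_encode (n, k)"]
    by (auto simp: prod_encode_eq)
  then show "A = B" by blast
qed

lemma ex_inj_germ_data: "\<exists>enc :: complex \<times> (nat \<Rightarrow> complex) \<Rightarrow> complex. inj enc"
proof -
  obtain g :: "real \<Rightarrow> nat set" where g: "inj g"
    using nat_sets_eqpoll_reals by (metis eqpoll_sym eqpoll_imp_lepoll lepoll_def' inj_on_def UNIV_I)
  obtain f :: "nat set \<Rightarrow> real" where f: "inj f"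
    using nat_sets_eqpoll_reals by (metis eqpoll_imp_lepoll lepoll_def')
  define seq :: "complex \<times> (nat \<Rightarrow> complex) \<Rightarrow> nat \<Rightarrow> complex"
    where "seq = (\<lambda>(z, s) n. case n of 0 \<Rightarrow> z | Suc m \<Rightarrow> s m)"
  define reals :: "(nat \<Rightarrow> complex) \<Rightarrow> nat \<Rightarrow> real"
    where "reals c n = (if even n then Re (c (n div 2)) else Im (c (n div 2)))" for c n
  have "inj seq"
  proof (rule injI)
    fix x y assume "seq x = seq y"
    then have "seq x 0 = seq y 0" "\<And>m. seq x (Suc m) = seq y (Suc m)" by simp_all
    then show "x = y" by (cases x, cases y) (simp add: seq_def fun_eq_iff)
  qed
  moreover have "inj reals"
  proof (rule injI)
    fix c d assume "reals c = reals d"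
    then have "reals c (2 * n) = reals d (2 * n)" "reals c (2 * n + 1) = reals d (2 * n + 1)" for n
      by simp_all
    then have "Re (c n) = Re (d n) \<and> Im (c n) = Im (d n)" for n
      unfolding reals_def by simp
    then show "c = d" by (simp add: fun_eq_iff complex_eq_iff)
  qed
  moreover have "inj ((\<circ>) g)"
    by (rule injI) (simp add: fun_eq_iff injD[OF g])
  moreover have "inj complex_of_real"
    by (rule injI) simp
  ultimately have "inj (complex_of_real \<circ> f \<circ> (\<lambda>A. {prod_encode (n, k) | n k. k \<in> A n}) \<circ> (\<circ>) g \<circ> reals \<circ> seq)"
    using f g inj_pack_nat_sets by (intro inj_compose) auto
  then show ?thesis by blast
qed

text \<open>Universality only quantifies over surfaces carried by subsets of \<open>\<complex>\<close>, so germs are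
  coded as complex numbers: a germ at \<open>z\<close> is determined by \<open>z\<close> and the derivatives of a
  representative at \<open>z\<close>.\<close>

definition germ_encode :: "complex \<times> (nat \<Rightarrow> complex) \<Rightarrow> complex" where
  "germ_encode = (SOME enc. inj enc)"

lemma inj_germ_encode: "inj germ_encode"
  unfolding germ_encode_def using ex_inj_germ_data by (rule someI_ex)

definition germ_at :: "complex \<Rightarrow> (complex \<Rightarrow> complex) \<Rightarrow> complex" where
  "germ_at z h = germ_encode (z, \<lambda>n. (deriv ^^ n) h z)"

definition germ_base :: "complex \<Rightarrow> complex" where
  "germ_base y = fst (inv germ_encode y)"

definition germ_value :: "complex \<Rightarrow> complex" where
  "germ_value y = snd (inv germ_encode y) 0"

lemma germ_base_germ_at [simp]: "germ_base (germ_at z h) = z"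
  unfolding germ_base_def germ_at_def using inj_germ_encode by simp

lemma germ_value_germ_at [simp]: "germ_value (germ_at z h) = h z"
  unfolding germ_value_def germ_at_def using inj_germ_encode by simp

lemma germ_at_eq_iff:
  "germ_at z h = germ_at w k \<longleftrightarrow> z = w \<and> (\<forall>n. (deriv ^^ n) h z = (deriv ^^ n) k z)"
  unfolding germ_at_def using inj_germ_encode by (auto dest: injD simp: fun_eq_iff)

lemma germ_at_cong_open:
  "open W \<Longrightarrow> z \<in> W \<Longrightarrow> (\<And>y. y \<in> W \<Longrightarrow> h y = k y) \<Longrightarrow> germ_at z h = germ_at z k"
  unfolding germ_at_eq_iff by (auto intro!: higher_deriv_cong_ev simp: eventually_nhds) blast

lemma germ_at_eq_imp_eq_on_ball:
  assumes "open A" "z \<in> A" "h holomorphic_on A" "open B" "z \<in> B" "k holomorphic_on B"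
    and "germ_at z h = germ_at z k"
  obtains e where "e > 0" "ball z e \<subseteq> A \<inter> B" "\<And>w. w \<in> ball z e \<Longrightarrow> h w = k w"
proof -
  obtain e where e: "e > 0" "ball z e \<subseteq> A \<inter> B"
    using assms by (meson open_Int IntI openE)
  have "h holomorphic_on ball z e" "k holomorphic_on ball z e"
    using assms e by (auto intro: holomorphic_on_subset)
  moreover have "\<And>n. (deriv ^^ n) h z = (deriv ^^ n) k z"
    using assms(7) unfolding germ_at_eq_iff by blast
  ultimately show ?thesis
    using that e holomorphic_fun_eq_on_ball by blast
qed

definition germ_sheet :: "(complex \<Rightarrow> complex) \<Rightarrow> complex set \<Rightarrow> complex set" where
  "germ_sheet h D = (\<lambda>w. germ_at w h) ` D"

definition germ_open :: "complex set \<Rightarrow> bool" where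
  "germ_open S \<longleftrightarrow> (\<forall>y\<in>S. \<exists>h D. open D \<and> h holomorphic_on D \<and> y \<in> germ_sheet h D \<and> germ_sheet h D \<subseteq> S)"

lemma germ_sheet_overlap:
  assumes "open D" "h holomorphic_on D" "w \<in> D"
    and "open D'" "h' holomorphic_on D'" "germ_at w h \<in> germ_sheet h' D'"
  obtains e where "e > 0" "ball w e \<subseteq> D \<inter> D'" "\<And>v. v \<in> ball w e \<Longrightarrow> germ_at v h = germ_at v h'"
proof -
  obtain w' where "w' \<in> D'" "germ_at w h = germ_at w' h'"
    using assms(6) unfolding germ_sheet_def by blast
  moreover from this have "w' = w" by (metis germ_base_germ_at)
  ultimately obtain e where e: "e > 0" "ball w e \<subseteq> D \<inter> D'" "\<And>v. v \<in> ball w e \<Longrightarrow> h v = h' v"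
    using germ_at_eq_imp_eq_on_ball[OF assms(1,3,2,4) _ assms(5)] by metis
  have "germ_at v h = germ_at v h'" if "v \<in> ball w e" for v
    by (rule germ_at_cong_open[OF open_ball that]) (use e in auto)
  with e that show ?thesis by blast
qed

lemma istopology_germ_open: "istopology germ_open"
  unfolding istopology_def
proof (intro conjI allI impI)
  fix S T assume S: "germ_open S" and T: "germ_open T"
  show "germ_open (S \<inter> T)"
    unfolding germ_open_def
  proof
    fix y assume y: "y \<in> S \<inter> T"
    obtain h1 D1 where 1: "open D1" "h1 holomorphic_on D1" "y \<in> germ_sheet h1 D1" "germ_sheet h1 D1 \<subseteq> S"
      using S y unfolding germ_open_def by blast
    obtain h2 D2 where 2: "open D2" "h2 holomorphic_on D2" "y \<in> germ_sheet h2 D2" "germ_sheet h2 D2 \<subseteq> T"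
      using T y unfolding germ_open_def by blast
    obtain w where w: "w \<in> D1" "y = germ_at w h1" using 1 unfolding germ_sheet_def by blast
    obtain e where e: "e > 0" "ball w e \<subseteq> D1 \<inter> D2" "\<And>v. v \<in> ball w e \<Longrightarrow> germ_at v h1 = germ_at v h2"
      using germ_sheet_overlap[OF 1(1,2) w(1) 2(1,2)] 2(3) w(2) by blast
    have "germ_sheet h1 (ball w e) \<subseteq> S \<inter> T"
      using e 1(4) 2(4) unfolding germ_sheet_def by force
    moreover have "y \<in> germ_sheet h1 (ball w e)" using w e unfolding germ_sheet_def by auto
    moreover have "h1 holomorphic_on ball w e" using 1 e by (auto intro: holomorphic_on_subset)
    ultimately show "\<exists>h D. open D \<and> h holomorphic_on D \<and> y \<in> germ_sheet h D \<and> germ_sheet h D \<subseteq> S \<inter> T"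
      by blast
  qed
next
  fix K assume "\<forall>S\<in>K. germ_open S"
  then show "germ_open (\<Union>K)" unfolding germ_open_def by (meson Union_iff subset_iff)
qed

definition germ_space :: "complex topology" where
  "germ_space = topology germ_open"

lemma openin_germ_space: "openin germ_space S \<longleftrightarrow> germ_open S"
  unfolding germ_space_def using istopology_germ_open by (simp add: topology_inverse')

lemma openin_germ_sheet: "open D \<Longrightarrow> h holomorphic_on D \<Longrightarrow> openin germ_space (germ_sheet h D)"
  unfolding openin_germ_space germ_open_def by blast

lemma germ_sheet_in_open:
  assumes "openin germ_space S" "y \<in> S"
  obtains h D where "open D" "h holomorphic_on D" "y \<in> germ_sheet h D" "germ_sheet h D \<subseteq> S"
  using assms unfolding openin_germ_space germ_open_def by blast

lemma topspace_germ_space: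
  "topspace germ_space = {y. \<exists>h D. open D \<and> h holomorphic_on D \<and> y \<in> germ_sheet h D}"
proof
  show "topspace germ_space \<subseteq> {y. \<exists>h D. open D \<and> h holomorphic_on D \<and> y \<in> germ_sheet h D}"
    unfolding topspace_def openin_germ_space germ_open_def by blast
  show "{y. \<exists>h D. open D \<and> h holomorphic_on D \<and> y \<in> germ_sheet h D} \<subseteq> topspace germ_space"
    using openin_germ_sheet openin_subset by blast
qed

lemma germ_at_in_germ_space:
  "open D \<Longrightarrow> h holomorphic_on D \<Longrightarrow> z \<in> D \<Longrightarrow> germ_at z h \<in> topspace germ_space"
  unfolding topspace_germ_space germ_sheet_def by blast

lemma germ_space_point:
  assumes "y \<in> topspace germ_space"
  obtains h z e where "e > 0" "h holomorphic_on ball z e" "y = germ_at z h"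
proof -
  obtain h D z where "open D" "h holomorphic_on D" "z \<in> D" "y = germ_at z h"
    using assms unfolding topspace_germ_space germ_sheet_def by blast
  moreover from this obtain e where "e > 0" "ball z e \<subseteq> D" using openE by blast
  ultimately show ?thesis using that[of e h z] by (auto intro: holomorphic_on_subset)
qed

lemma continuous_map_germ_at:
  assumes "open D" "h holomorphic_on D"
  shows "continuous_map (top_of_set D) germ_space (\<lambda>w. germ_at w h)"
  unfolding continuous_map_openin_preimage_eq
proof (intro conjI allI impI)
  show "(\<lambda>w. germ_at w h) \<in> topspace (top_of_set D) \<rightarrow> topspace germ_space"
    using germ_at_in_germ_space[OF assms] by auto
  fix S assume S: "openin germ_space S"
  let ?P = "topspace (top_of_set D) \<inter> (\<lambda>w. germ_at w h) -` S"
  have "open ?P"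
  proof (rule openI)
    fix w assume "w \<in> ?P"
    then have w: "w \<in> D" "germ_at w h \<in> S" by auto
    obtain h' D' where 1: "open D'" "h' holomorphic_on D'" "germ_at w h \<in> germ_sheet h' D'" "germ_sheet h' D' \<subseteq> S"
      using S w(2) by (rule germ_sheet_in_open)
    obtain e where e: "e > 0" "ball w e \<subseteq> D \<inter> D'" "\<And>v. v \<in> ball w e \<Longrightarrow> germ_at v h = germ_at v h'"
      using germ_sheet_overlap[OF assms w(1) 1(1-3)] by blast
    have "ball w e \<subseteq> ?P"
      using e 1(4) unfolding germ_sheet_def by force
    then show "\<exists>\<epsilon>>0. ball w \<epsilon> \<subseteq> ?P" using e(1) by blast
  qed
  then show "openin (top_of_set D) ?P" unfolding openin_open by (intro exI[of _ ?P]) auto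
qed

lemma continuous_map_germ_base: "continuous_map germ_space euclidean germ_base"
  unfolding continuous_map_openin_preimage_eq
proof (intro conjI allI impI)
  show "germ_base \<in> topspace germ_space \<rightarrow> topspace euclidean" by simp
  fix V :: "complex set" assume "openin euclidean V"
  then have V: "open V" by simp
  show "openin germ_space (topspace germ_space \<inter> germ_base -` V)"
    unfolding openin_germ_space germ_open_def
  proof
    fix y assume y: "y \<in> topspace germ_space \<inter> germ_base -` V"
    then obtain h D z where 1: "open D" "h holomorphic_on D" "z \<in> D" "y = germ_at z h"
      unfolding topspace_germ_space germ_sheet_def by blast
    have "open (D \<inter> V)" "h holomorphic_on D \<inter> V" "y \<in> germ_sheet h (D \<inter> V)"
      using 1 V y by (auto simp: germ_sheet_def intro: holomorphic_on_subset)
    moreover have "germ_sheet h (D \<inter> V) \<subseteq> topspace germ_space \<inter> germ_base -` V"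
      using germ_at_in_germ_space[OF 1(1,2)] unfolding germ_sheet_def by auto
    ultimately show "\<exists>h D. open D \<and> h holomorphic_on D \<and> y \<in> germ_sheet h D
        \<and> germ_sheet h D \<subseteq> topspace germ_space \<inter> germ_base -` V"
      by blast
  qed
qed

lemma homeomorphic_map_germ_base_sheet:
  assumes "open D" "h holomorphic_on D"
  shows "homeomorphic_map (subtopology germ_space (germ_sheet h D)) (top_of_set D) germ_base"
  unfolding homeomorphic_map_maps homeomorphic_maps_def
proof (intro exI[of _ "\<lambda>w. germ_at w h"] conjI ballI)
  have ts: "topspace (subtopology germ_space (germ_sheet h D)) = germ_sheet h D"
    using germ_at_in_germ_space[OF assms] by (auto simp: germ_sheet_def)
  show "continuous_map (subtopology germ_space (germ_sheet h D)) (top_of_set D) germ_base"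
    by (rule continuous_map_into_subtopology)
       (auto simp: ts germ_sheet_def intro: continuous_map_from_subtopology continuous_map_germ_base)
  show "continuous_map (top_of_set D) (subtopology germ_space (germ_sheet h D)) (\<lambda>w. germ_at w h)"
    by (rule continuous_map_into_subtopology)
       (auto simp: germ_sheet_def intro: continuous_map_germ_at[OF assms])
  show "germ_at (germ_base y) h = y" if "y \<in> topspace (subtopology germ_space (germ_sheet h D))" for y
    using that ts unfolding germ_sheet_def by auto
qed simp

lemma inj_on_germ_base_sheet: "inj_on germ_base (germ_sheet h D)"
  unfolding germ_sheet_def by (rule inj_onI) auto

lemma inv_into_germ_sheet: "w \<in> D \<Longrightarrow> inv_into (germ_sheet h D) germ_base w = germ_at w h"
  by (rule inv_into_f_eq[OF inj_on_germ_base_sheet]) (auto simp: germ_sheet_def)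

lemma germ_base_image_germ_sheet [simp]: "germ_base ` germ_sheet h D = D"
  unfolding germ_sheet_def by (simp add: image_image)

lemma Hausdorff_germ_space: "Hausdorff_space germ_space"
  unfolding Hausdorff_space_def
proof (intro allI impI, elim conjE)
  fix y1 y2 assume y: "y1 \<in> topspace germ_space" "y2 \<in> topspace germ_space" and ne: "y1 \<noteq> y2"
  obtain h1 z1 e1 where 1: "e1 > 0" "h1 holomorphic_on ball z1 e1" "y1 = germ_at z1 h1"
    using y(1) by (rule germ_space_point)
  obtain h2 z2 e2 where 2: "e2 > 0" "h2 holomorphic_on ball z2 e2" "y2 = germ_at z2 h2"
    using y(2) by (rule germ_space_point)
  define e where "e = (if z1 = z2 then min e1 e2 else min (min e1 e2) (dist z1 z2 / 2))"
  have e: "e > 0" "e \<le> e1" "e \<le> e2" using 1 2 by (auto simp: e_def)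
  have hol: "h1 holomorphic_on ball z1 e" "h2 holomorphic_on ball z2 e"
    using 1(2) 2(2) e(2,3) by (meson holomorphic_on_subset subset_ball)+
  let ?U = "germ_sheet h1 (ball z1 e)" and ?V = "germ_sheet h2 (ball z2 e)"
  have "disjnt ?U ?V"
  proof (rule ccontr)
    assume "\<not> disjnt ?U ?V"
    then obtain w where w: "w \<in> ball z1 e" "w \<in> ball z2 e" "germ_at w h1 = germ_at w h2"
      unfolding disjnt_def germ_sheet_def by (auto simp: germ_at_eq_iff)
    have z: "z1 = z2"
    proof (rule ccontr)
      assume "z1 \<noteq> z2"
      then have "e \<le> dist z1 z2 / 2" by (simp add: e_def)
      moreover have "dist z1 z2 \<le> dist z1 w + dist z2 w" by (rule dist_triangle2)
      ultimately show False using w(1,2) by (simp add: dist_commute)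
    qed
    obtain d where d: "d > 0" "ball w d \<subseteq> ball z1 e" "\<And>v. v \<in> ball w d \<Longrightarrow> h1 v = h2 v"
      using germ_at_eq_imp_eq_on_ball[OF open_ball w(1) hol(1) open_ball w(1)] hol(2) w z by auto
    have "h1 v = h2 v" if "v \<in> ball z1 e" for v
      by (rule analytic_continuation_open[of "ball w d" "ball z1 e"]) (use d hol z that in auto)
    then have "germ_at z1 h1 = germ_at z1 h2"
      using germ_at_cong_open[OF open_ball centre_in_ball[THEN iffD2, OF e(1)]] by blast
    with ne z 1(3) 2(3) show False by metis
  qed
  moreover have "openin germ_space ?U" "openin germ_space ?V"
    using hol by (auto intro: openin_germ_sheet)
  moreover have "y1 \<in> ?U" "y2 \<in> ?V"
    using 1(3) 2(3) e unfolding germ_sheet_def by auto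
  ultimately show "\<exists>U V. openin germ_space U \<and> openin germ_space V \<and> y1 \<in> U \<and> y2 \<in> V \<and> disjnt U V"
    by blast
qed

lemma locally_connected_germ_space: "locally_connected_space germ_space"
  unfolding locally_connected_space
proof (intro allI impI, elim conjE)
  fix S y assume S: "openin germ_space S" "y \<in> S"
  then obtain h D where hD: "open D" "h holomorphic_on D" "y \<in> germ_sheet h D" "germ_sheet h D \<subseteq> S"
    by (rule germ_sheet_in_open)
  then obtain z where z: "z \<in> D" "y = germ_at z h" unfolding germ_sheet_def by blast
  then obtain e where e: "e > 0" "ball z e \<subseteq> D" using hD(1) openE by blast
  let ?U = "germ_sheet h (ball z e)"
  have hol: "h holomorphic_on ball z e" using hD(2) e(2) by (rule holomorphic_on_subset)
  have "connectedin germ_space ?U"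
    unfolding germ_sheet_def
    by (rule connectedin_continuous_map_image[OF continuous_map_germ_at[OF open_ball hol]]) auto
  moreover have "y \<in> ?U" "?U \<subseteq> S"
    using z e hD(4) unfolding germ_sheet_def by auto
  ultimately show "\<exists>U. openin germ_space U \<and> connectedin germ_space U \<and> y \<in> U \<and> U \<subseteq> S"
    using openin_germ_sheet[OF open_ball hol] by blast
qed

lemma germ_sheet_chart:
  assumes "open D" "h holomorphic_on D" "germ_sheet h D \<subseteq> C"
  shows "openin (subtopology germ_space C) (germ_sheet h D)"
    and "homeomorphic_map (subtopology (subtopology germ_space C) (germ_sheet h D))
           (top_of_set (germ_base ` germ_sheet h D)) germ_base"
  using openin_germ_sheet[OF assms(1,2)] assms(3) homeomorphic_map_germ_base_sheet[OF assms(1,2)]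
  by (auto simp: openin_subtopology subtopology_subtopology Int_absorb1)

lemma riemann_surface_germ_space_open:
  assumes "openin germ_space C" "connectedin germ_space C" "C \<noteq> {}"
  shows "riemann_surface_over_C (subtopology germ_space C) germ_base"
  unfolding riemann_surface_over_C_def
proof (intro conjI ballI)
  have ts: "topspace (subtopology germ_space C) = C"
    using assms(1) openin_subset by auto
  show "Hausdorff_space (subtopology germ_space C)"
    by (simp add: Hausdorff_germ_space Hausdorff_space_subtopology)
  show "connected_space (subtopology germ_space C)"
    using assms(2) by (simp add: connectedin_def)
  show "topspace (subtopology germ_space C) \<noteq> {}" using assms(3) ts by simp
  fix y assume "y \<in> topspace (subtopology germ_space C)"
  then obtain h D where hD: "open D" "h holomorphic_on D" "y \<in> germ_sheet h D" "germ_sheet h D \<subseteq> C"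
    using assms(1) ts by (metis germ_sheet_in_open)
  then show "\<exists>U. openin (subtopology germ_space C) U \<and> y \<in> U \<and> open (germ_base ` U) \<and>
      homeomorphic_map (subtopology (subtopology germ_space C) U) (top_of_set (germ_base ` U)) germ_base"
    using germ_sheet_chart[OF hD(1,2,4)] by auto
qed

lemma holo_on_surface_germ_value:
  assumes "openin germ_space C"
  shows "holo_on_surface (subtopology germ_space C) germ_base C germ_value"
  unfolding holo_on_surface_def
proof (intro conjI ballI)
  show "openin (subtopology germ_space C) C"
    using assms openin_subset by (simp add: openin_subtopology_refl)
  fix y assume "y \<in> C"
  with assms obtain h D where hD: "open D" "h holomorphic_on D" "y \<in> germ_sheet h D" "germ_sheet h D \<subseteq> C"
    by (rule germ_sheet_in_open)
  have "(germ_value \<circ> inv_into (germ_sheet h D) germ_base) holomorphic_on D"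
    by (rule holomorphic_transform[OF hD(2)]) (simp add: inv_into_germ_sheet)
  then show "\<exists>U. openin (subtopology germ_space C) U \<and> y \<in> U \<and> U \<subseteq> C \<and> open (germ_base ` U)
      \<and> inj_on germ_base U \<and> homeomorphic_map (subtopology (subtopology germ_space C) U)
          (top_of_set (germ_base ` U)) germ_base
      \<and> (germ_value \<circ> inv_into U germ_base) holomorphic_on germ_base ` U"
    using hD germ_sheet_chart[OF hD(1,2,4)] inj_on_germ_base_sheet by auto
qed

lemma holo_on_surface_euclidean_id:
  "holo_on_surface euclidean id A G \<longleftrightarrow> open A \<and> G holomorphic_on A"
proof
  assume h: "holo_on_surface euclidean id A G"
  have "G field_differentiable at x" if "x \<in> A" for x
  proof -
    obtain U where U: "open U" "x \<in> U" "U \<subseteq> A" "(G \<circ> inv_into U id) holomorphic_on U"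
      using h \<open>x \<in> A\<close> unfolding holo_on_surface_def by auto
    have "G holomorphic_on U"
      by (rule holomorphic_transform[OF U(4)]) (simp add: inv_into_f_eq)
    then show ?thesis using U holomorphic_on_imp_differentiable_at by blast
  qed
  moreover have "open A" using h unfolding holo_on_surface_def by simp
  ultimately show "open A \<and> G holomorphic_on A"
    by (simp add: holomorphic_on_open field_differentiable_def)
next
  assume h: "open A \<and> G holomorphic_on A"
  have "(G \<circ> inv_into A id) holomorphic_on A"
    by (rule holomorphic_transform[OF conjunct2[OF h]]) (simp add: inv_into_f_eq)
  then show "holo_on_surface euclidean id A G"
    unfolding holo_on_surface_def using h by (auto intro!: exI[of _ A])
qed

lemma same_germ_euclidean_imp_germ_at_eq: "same_germ euclidean z f g \<Longrightarrow> germ_at z f = germ_at z g"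
  unfolding same_germ_def by (auto intro: germ_at_cong_open)

lemma continuous_map_interval_near_openin:
  assumes "continuous_map (top_of_set {0..1}) X \<Gamma>" "openin X V" "t \<in> {0..1}" "\<Gamma> t \<in> V"
  obtains \<epsilon> :: real where "\<epsilon> > 0" "\<And>s. s \<in> {0..1} \<Longrightarrow> \<bar>s - t\<bar> < \<epsilon> \<Longrightarrow> \<Gamma> s \<in> V"
proof -
  have "openin (top_of_set {0..1}) {s \<in> {0..1}. \<Gamma> s \<in> V}"
    using openin_continuous_map_preimage[OF assms(1,2)] by simp
  then show ?thesis
    using that assms(3,4) unfolding openin_euclidean_subtopology_iff dist_real_def by force
qed

lemma continuous_map_germ_lift:
  fixes \<gamma> :: "real \<Rightarrow> complex"
  assumes cont: "continuous_on {0..1} \<gamma>"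
    and hol: "\<And>t. t \<in> {0..1} \<Longrightarrow> \<gamma> t \<in> U t \<and> open (U t) \<and> F t holomorphic_on U t"
    and loc: "\<forall>t\<in>{0..1}. \<exists>\<epsilon>>0. \<forall>s\<in>{0..1}. \<bar>s - t\<bar> < \<epsilon> \<longrightarrow>
           \<gamma> s \<in> U t \<and> same_germ euclidean (\<gamma> s) (F s) (F t)"
  shows "continuous_map (top_of_set {0..1}) germ_space (\<lambda>t. germ_at (\<gamma> t) (F t))"
  unfolding continuous_map_openin_preimage_eq
proof (intro conjI allI impI)
  show "(\<lambda>t. germ_at (\<gamma> t) (F t)) \<in> topspace (top_of_set {0..1}) \<rightarrow> topspace germ_space"
  proof
    fix t assume "t \<in> topspace (top_of_set {0..1::real})"
    then have "\<gamma> t \<in> U t" "open (U t)" "F t holomorphic_on U t" using hol by auto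
    then show "germ_at (\<gamma> t) (F t) \<in> topspace germ_space"
      using germ_at_in_germ_space by blast
  qed
  fix S assume S: "openin germ_space S"
  let ?P = "topspace (top_of_set {0..1::real}) \<inter> (\<lambda>t. germ_at (\<gamma> t) (F t)) -` S"
  show "openin (top_of_set {0..1}) ?P"
  proof (subst openin_subopen, intro ballI)
    fix t assume "t \<in> ?P"
    then have t: "t \<in> {0..1}" "germ_at (\<gamma> t) (F t) \<in> S" by auto
    obtain h D where hD: "open D" "h holomorphic_on D" "germ_at (\<gamma> t) (F t) \<in> germ_sheet h D"
        "germ_sheet h D \<subseteq> S"
      using S t(2) by (rule germ_sheet_in_open)
    obtain e where e: "e > 0" "ball (\<gamma> t) e \<subseteq> U t \<inter> D"
        "\<And>v. v \<in> ball (\<gamma> t) e \<Longrightarrow> germ_at v (F t) = germ_at v h"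
      using germ_sheet_overlap[of "U t" "F t" "\<gamma> t", OF _ _ _ hD(1-3)] hol[OF t(1)] by blast
    obtain d where d: "d > 0" "\<And>s. s \<in> {0..1} \<Longrightarrow> \<bar>s - t\<bar> < d \<Longrightarrow> \<gamma> s \<in> ball (\<gamma> t) e"
      using continuous_map_interval_near_openin[of euclidean \<gamma> "ball (\<gamma> t) e" t] cont t(1) e(1)
      by auto
    obtain \<epsilon> where \<epsilon>: "\<epsilon> > 0" "\<forall>s\<in>{0..1}. \<bar>s - t\<bar> < \<epsilon> \<longrightarrow> same_germ euclidean (\<gamma> s) (F s) (F t)"
      using loc t(1) by blast
    let ?T = "{0..1} \<inter> ball t (min d \<epsilon>)"
    have "?T \<subseteq> ?P"
    proof
      fix s assume s: "s \<in> ?T"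
      then have "s \<in> {0..1}" "\<gamma> s \<in> ball (\<gamma> t) e" "\<bar>s - t\<bar> < \<epsilon>"
        using d by (auto simp: dist_real_def abs_minus_commute)
      then have "germ_at (\<gamma> s) (F s) = germ_at (\<gamma> s) h" "\<gamma> s \<in> D"
        using \<epsilon> e same_germ_euclidean_imp_germ_at_eq by auto
      then show "s \<in> ?P" using s hD(4) unfolding germ_sheet_def by auto
    qed
    moreover have "openin (top_of_set {0..1}) ?T" "t \<in> ?T"
      using t(1) d \<epsilon> by (auto simp: openin_open_Int)
    ultimately show "\<exists>T. openin (top_of_set {0..1}) T \<and> t \<in> T \<and> T \<subseteq> ?P" by blast
  qed
qed

lemma endless_surface_germ_component:
  assumes "r > 0" "\<phi> holomorphic_on ball 0 r" and oc: "omega_continuable \<Omega> \<phi>"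
  defines "C \<equiv> connected_component_of_set germ_space (germ_at 0 \<phi>)"
  shows "endless_surface \<Omega> (subtopology germ_space C) germ_base (germ_at 0 \<phi>)"
  unfolding endless_surface_def
proof (intro conjI allI impI)
  have "germ_at 0 \<phi> \<in> topspace germ_space"
    using assms by (intro germ_at_in_germ_space[of "ball 0 r"]) auto
  then have C0: "germ_at 0 \<phi> \<in> C"
    unfolding C_def by (simp add: connected_component_of_refl)
  have "openin germ_space C" unfolding C_def
    by (rule openin_connected_component_of_locally_connected_space[OF locally_connected_germ_space])
  then show "riemann_surface_over_C (subtopology germ_space C) germ_base"
    using C0 connectedin_connected_component_of unfolding C_def
    by (intro riemann_surface_germ_space_open) auto
  show "germ_at 0 \<phi> \<in> topspace (subtopology germ_space C)"
    using C0 openin_subset[OF \<open>openin germ_space C\<close>] by (simp add: Int_absorb1)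
  show "germ_base (germ_at 0 \<phi>) = 0" by simp
  fix \<gamma> assume al: "allowed_path \<Omega> \<gamma>"
  then have cont: "continuous_on {0..1} \<gamma>" and "\<gamma> 0 = 0"
    unfolding allowed_path_def by (auto intro: lipschitz_on_continuous_on)
  obtain U F where UF: "\<forall>t\<in>{0..1}. \<gamma> t \<in> U t \<and> holo_on_surface euclidean id (U t) (F t)"
      "same_germ euclidean (\<gamma> 0) (F 0) \<phi>"
      "\<forall>t\<in>{0..1}. \<exists>\<epsilon>>0. \<forall>s\<in>{0..1}. \<bar>s - t\<bar> < \<epsilon> \<longrightarrow>
           \<gamma> s \<in> U t \<and> same_germ euclidean (\<gamma> s) (F s) (F t)"
    using oc al unfolding omega_continuable_def continuable_along_def by blast
  let ?G = "\<lambda>t. germ_at (\<gamma> t) (F t)"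
  have "\<And>t. t \<in> {0..1} \<Longrightarrow> \<gamma> t \<in> U t \<and> open (U t) \<and> F t holomorphic_on U t"
    using UF(1) holo_on_surface_euclidean_id by blast
  then have lift: "continuous_map (top_of_set {0..1}) germ_space ?G"
    by (rule continuous_map_germ_lift[OF cont _ UF(3)])
  have G0: "?G 0 = germ_at 0 \<phi>"
    using same_germ_euclidean_imp_germ_at_eq[OF UF(2)] \<open>\<gamma> 0 = 0\<close> by simp
  have "?G ` {0..1} \<subseteq> C" unfolding C_def
  proof (rule connected_component_of_maximal)
    show "connectedin germ_space (?G ` {0..1})"
      by (rule connectedin_continuous_map_image[OF lift]) auto
    show "germ_at 0 \<phi> \<in> ?G ` {0..1}" by (rule image_eqI[where x=0]) (use G0 in auto)
  qed
  then have "continuous_map (top_of_set {0..1}) (subtopology germ_space C) ?G"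
    using continuous_map_into_subtopology[OF lift] by (simp add: image_subset_iff_funcset)
  then show "\<exists>\<Gamma>. continuous_map (top_of_set {0..1}) (subtopology germ_space C) \<Gamma> \<and> \<Gamma> 0 = germ_at 0 \<phi>
      \<and> (\<forall>t\<in>{0..1}. germ_base (\<Gamma> t) = \<gamma> t)"
    using G0 by auto
qed

lemma open_image_chart:
  assumes "homeomorphic_map (subtopology X V) (top_of_set (p ` V)) p" "open (p ` V)"
    and "openin X S" "S \<subseteq> V"
  shows "open (p ` S)"
proof -
  have "openin (subtopology X V) S"
    unfolding openin_subtopology using assms(3,4) by blast
  moreover have "S \<subseteq> topspace (subtopology X V)"
    using assms(3,4) openin_subset by fastforce
  ultimately have "openin (top_of_set (p ` V)) (p ` S)"
    using homeomorphic_map_openness[OF assms(1)] by blast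
  then show ?thesis using assms(2) openin_open_trans by blast
qed

lemma homeomorphic_map_restrict_subtopology:
  assumes "homeomorphic_map (subtopology X U) (subtopology Y (f ` U)) f"
    and "W \<subseteq> U" "W \<subseteq> topspace X"
  shows "homeomorphic_map (subtopology X W) (subtopology Y (f ` W)) f"
proof -
  have "f ` (topspace X \<inter> U) = topspace Y \<inter> f ` U"
    using homeomorphic_imp_surjective_map[OF assms(1)] by simp
  then have "f ` (topspace (subtopology X U) \<inter> W) = topspace (subtopology Y (f ` U)) \<inter> f ` W"
    using assms(2,3) by auto
  from homeomorphic_map_subtopologies[OF assms(1) this] show ?thesis
    using assms(2) by (simp add: subtopology_subtopology Int_absorb1 image_mono)
qed

lemma surface_morphism_pullback_chart:
  assumes f: "surface_morphism X p o0 Y q o1 f" and x: "x \<in> topspace X"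
    and V: "openin Y V" "f x \<in> V" "open (q ` V)"
      "homeomorphic_map (subtopology Y V) (top_of_set (q ` V)) q"
  obtains U where "openin X U" "x \<in> U" "U \<subseteq> topspace X" "f ` U \<subseteq> V" "open (p ` U)"
    "inj_on p U" "homeomorphic_map (subtopology X U) (top_of_set (p ` U)) p"
proof -
  have cont: "continuous_map X Y f" and qf: "\<And>u. u \<in> topspace X \<Longrightarrow> q (f u) = p u"
    using f unfolding surface_morphism_def by auto
  obtain U1 where U1: "openin X U1" "x \<in> U1" "openin Y (f ` U1)"
      "homeomorphic_map (subtopology X U1) (subtopology Y (f ` U1)) f"
    using f x unfolding surface_morphism_def by blast
  define U where "U = U1 \<inter> {u \<in> topspace X. f u \<in> V}"
  have U: "openin X U" "x \<in> U" "U \<subseteq> U1" "U \<subseteq> topspace X"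
    unfolding U_def using U1 V x openin_continuous_map_preimage[OF cont V(1)] by auto
  have fU: "f ` U = f ` U1 \<inter> V"
    using openin_subset[OF U1(1)] by (auto simp: U_def)
  then have fU_open: "openin Y (f ` U)"
    using U1(3) V(1) by auto
  have pU: "p ` U = q ` f ` U"
    using qf U(4) by (force simp: image_image)
  have hom_f: "homeomorphic_map (subtopology X U) (subtopology Y (f ` U)) f"
    by (rule homeomorphic_map_restrict_subtopology[OF U1(4) U(3,4)])
  have hom_q: "homeomorphic_map (subtopology Y (f ` U)) (top_of_set (q ` f ` U)) q"
    using fU openin_subset[OF fU_open] by (intro homeomorphic_map_restrict_subtopology[OF V(4)]) auto
  have hom: "homeomorphic_map (subtopology X U) (top_of_set (p ` U)) p"
    using homeomorphic_map_compose[OF hom_f hom_q] pU qf U(4)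
    by (auto intro: homeomorphic_map_eq)
  moreover have "inj_on p U"
    using homeomorphic_imp_injective_map[OF hom] U(4) by (simp add: Int_absorb1)
  moreover have "open (p ` U)"
    using open_image_chart[OF V(4,3) fU_open] fU pU by auto
  ultimately show ?thesis
    using that U fU by blast
qed

lemma holo_on_surface_comp_morphism:
  assumes f: "surface_morphism X p o0 Y q o1 f" and G: "holo_on_surface Y q (topspace Y) G"
  shows "holo_on_surface X p (topspace X) (G \<circ> f)"
  unfolding holo_on_surface_def
proof (intro conjI ballI)
  show "openin X (topspace X)" by simp
  fix x assume x: "x \<in> topspace X"
  have qf: "\<And>u. u \<in> topspace X \<Longrightarrow> q (f u) = p u"
    using f unfolding surface_morphism_def by auto
  have "f x \<in> topspace Y"
    using f x unfolding surface_morphism_def by (meson continuous_map_def funcset_mem)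
  then obtain V where V: "openin Y V" "f x \<in> V" "open (q ` V)" "inj_on q V"
      "homeomorphic_map (subtopology Y V) (top_of_set (q ` V)) q"
      "(G \<circ> inv_into V q) holomorphic_on q ` V"
    using G unfolding holo_on_surface_def by blast
  obtain U where U: "openin X U" "x \<in> U" "U \<subseteq> topspace X" "f ` U \<subseteq> V" "open (p ` U)"
      "inj_on p U" "homeomorphic_map (subtopology X U) (top_of_set (p ` U)) p"
    using surface_morphism_pullback_chart[OF f x V(1-3,5)] by blast
  have "(G \<circ> f \<circ> inv_into U p) holomorphic_on p ` U"
  proof (rule holomorphic_transform[OF holomorphic_on_subset[OF V(6)]])
    show "p ` U \<subseteq> q ` V" using U(3,4) qf by (force simp: image_image)
    fix w assume "w \<in> p ` U"
    then obtain u where u: "u \<in> U" "w = p u" by blast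
    then have "inv_into U p w = u" using U(6) by (simp add: inv_into_f_f)
    moreover have "inv_into V q w = f u"
      using u U(3,4) V(4) qf by (auto intro!: inv_into_f_eq)
    ultimately show "(G \<circ> inv_into V q) w = (G \<circ> f \<circ> inv_into U p) w" by simp
  qed
  then show "\<exists>U. openin X U \<and> x \<in> U \<and> U \<subseteq> topspace X \<and> open (p ` U) \<and> inj_on p U
      \<and> homeomorphic_map (subtopology X U) (top_of_set (p ` U)) p
      \<and> (G \<circ> f \<circ> inv_into U p) holomorphic_on p ` U"
    using U by blast
qed

lemma omega_continuable_imp_global_extension:
  assumes u: "universal_endless \<Omega> X p o0"
    and r: "r > 0" "\<phi> holomorphic_on ball 0 r" and oc: "omega_continuable \<Omega> \<phi>"
  shows "\<exists>F. holo_on_surface X p (topspace X) F \<and> same_germ X o0 F (\<phi> \<circ> p)"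
proof -
  define C where "C = connected_component_of_set germ_space (germ_at 0 \<phi>)"
  let ?Y = "subtopology germ_space C"
  have C: "openin germ_space C" unfolding C_def
    by (rule openin_connected_component_of_locally_connected_space[OF locally_connected_germ_space])
  have "endless_surface \<Omega> ?Y germ_base (germ_at 0 \<phi>)"
    unfolding C_def using r oc by (rule endless_surface_germ_component)
  then obtain f where f: "surface_morphism X p o0 ?Y germ_base (germ_at 0 \<phi>) f"
    using u unfolding universal_endless_def by blast
  have "holo_on_surface ?Y germ_base (topspace ?Y) germ_value"
    using holo_on_surface_germ_value[OF C] openin_subset[OF C] by (simp add: Int_absorb1)
  with f have "holo_on_surface X p (topspace X) (germ_value \<circ> f)"
    by (rule holo_on_surface_comp_morphism)
  moreover have "same_germ X o0 (germ_value \<circ> f) (\<phi> \<circ> p)"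
    unfolding same_germ_def
  proof (intro exI conjI ballI)
    have cont: "continuous_map X ?Y f" and qf: "\<forall>x\<in>topspace X. germ_base (f x) = p x"
      and "f o0 = germ_at 0 \<phi>"
      using f unfolding surface_morphism_def by auto
    let ?N = "germ_sheet \<phi> (ball 0 r)"
    have "openin ?Y (C \<inter> ?N)"
      using openin_germ_sheet[OF open_ball r(2)] by (auto simp: openin_subtopology)
    then show "openin X {x \<in> topspace X. f x \<in> C \<inter> ?N}"
      by (rule openin_continuous_map_preimage[OF cont])
    have "o0 \<in> topspace X" using u unfolding universal_endless_def endless_surface_def by blast
    moreover have "f o0 \<in> C" using cont \<open>o0 \<in> topspace X\<close> by (auto simp: continuous_map_def Pi_iff)
    moreover have "f o0 \<in> ?N" using \<open>f o0 = germ_at 0 \<phi>\<close> r(1) by (simp add: germ_sheet_def)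
    ultimately show "o0 \<in> {x \<in> topspace X. f x \<in> C \<inter> ?N}" by blast
    fix x assume "x \<in> {x \<in> topspace X. f x \<in> C \<inter> ?N}"
    then obtain v where "x \<in> topspace X" "f x = germ_at v \<phi>" unfolding germ_sheet_def by blast
    moreover from this have "v = p x" using qf by (metis germ_base_germ_at)
    ultimately show "(germ_value \<circ> f) x = (\<phi> \<circ> p) x" by simp
  qed
  ultimately show ?thesis by blast
qed

lemma continuable_along_of_global_extension:
  assumes "holo_on_surface X p (topspace X) F" "same_germ X (\<Gamma> 0) F f0"
    and "continuous_map (top_of_set {0..1}) X \<Gamma>"
  shows "continuable_along X p f0 \<Gamma>"
  unfolding continuable_along_def
proof (intro exI[of _ "\<lambda>_. topspace X"] exI[of _ "\<lambda>_. F"] conjI ballI)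
  fix t :: real assume "t \<in> {0..1}"
  then have "\<Gamma> t \<in> topspace X" using assms(3) by (auto simp: continuous_map_def Pi_iff)
  then show "\<Gamma> t \<in> topspace X" "holo_on_surface X p (topspace X) F"
    and "\<exists>\<epsilon>>0. \<forall>s\<in>{0..1}. \<bar>s - t\<bar> < \<epsilon> \<longrightarrow> \<Gamma> s \<in> topspace X \<and> same_germ X (\<Gamma> s) F F"
    using assms(1,3) by (auto simp: same_germ_def continuous_map_def intro!: exI[of _ 1])
qed (rule assms(2))

lemma same_germ_in_chart:
  assumes V: "openin X V" "homeomorphic_map (subtopology X V) (top_of_set (p ` V)) p"
      "open (p ` V)" "inj_on p V"
    and W: "openin X W" "x \<in> V \<inter> W" "\<And>y. y \<in> V \<inter> W \<Longrightarrow> g (p y) = F y"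
  shows "same_germ euclidean (p x) (F \<circ> inv_into V p) g"
  unfolding same_germ_def
proof (intro exI[of _ "p ` (V \<inter> W)"] conjI ballI)
  show "openin euclidean (p ` (V \<inter> W))"
    using open_image_chart[OF V(2,3) openin_Int[OF V(1) W(1)]] by simp
  show "p x \<in> p ` (V \<inter> W)" using W(2) by blast
  fix z assume "z \<in> p ` (V \<inter> W)"
  then obtain y where "y \<in> V \<inter> W" "z = p y" by blast
  then show "(F \<circ> inv_into V p) z = g z" using V(4) W(3) by (simp add: inv_into_f_f)
qed

lemma continuable_along_projection:
  assumes \<Gamma>: "continuous_map (top_of_set {0..1}) X \<Gamma>" "\<And>t. t \<in> {0..1} \<Longrightarrow> p (\<Gamma> t) = \<gamma> t"
    and "continuable_along X p (\<phi> \<circ> p) \<Gamma>"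
  shows "continuable_along euclidean id \<phi> \<gamma>"
proof -
  obtain U F where UF: "\<forall>t\<in>{0..1}. \<Gamma> t \<in> U t \<and> holo_on_surface X p (U t) (F t)"
      "same_germ X (\<Gamma> 0) (F 0) (\<phi> \<circ> p)"
      "\<forall>t\<in>{0..1}. \<exists>\<epsilon>>0. \<forall>s\<in>{0..1}. \<bar>s - t\<bar> < \<epsilon> \<longrightarrow> \<Gamma> s \<in> U t \<and> same_germ X (\<Gamma> s) (F s) (F t)"
    using assms(3) unfolding continuable_along_def by blast
  have "\<forall>t\<in>{0..1}. \<exists>V. openin X V \<and> \<Gamma> t \<in> V \<and> V \<subseteq> U t \<and> open (p ` V) \<and> inj_on p V
      \<and> homeomorphic_map (subtopology X V) (top_of_set (p ` V)) p
      \<and> (F t \<circ> inv_into V p) holomorphic_on (p ` V)"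
    using UF(1) unfolding holo_on_surface_def by blast
  then obtain V where V: "\<And>t. t \<in> {0..1} \<Longrightarrow> openin X (V t) \<and> \<Gamma> t \<in> V t \<and> open (p ` V t)
      \<and> inj_on p (V t) \<and> homeomorphic_map (subtopology X (V t)) (top_of_set (p ` V t)) p
      \<and> (F t \<circ> inv_into (V t) p) holomorphic_on (p ` V t)"
    by metis
  show ?thesis
    unfolding continuable_along_def
  proof (intro exI[of _ "\<lambda>t. p ` V t"] exI[of _ "\<lambda>t. F t \<circ> inv_into (V t) p"] conjI ballI)
    fix t :: real assume t: "t \<in> {0..1}"
    show "\<gamma> t \<in> p ` V t" using V[OF t] \<Gamma>(2)[OF t] by (metis image_eqI)
    show "holo_on_surface euclidean id (p ` V t) (F t \<circ> inv_into (V t) p)"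
      unfolding holo_on_surface_euclidean_id using V[OF t] by blast
  next
    have t0: "(0::real) \<in> {0..1}" by simp
    obtain W where "openin X W" "\<Gamma> 0 \<in> W" "\<forall>y\<in>W. F 0 y = (\<phi> \<circ> p) y"
      using UF(2) unfolding same_germ_def by blast
    then show "same_germ euclidean (\<gamma> 0) (F 0 \<circ> inv_into (V 0) p) \<phi>"
      using same_germ_in_chart[of X "V 0" p W "\<Gamma> 0" \<phi> "F 0"] V[OF t0] \<Gamma>(2)[OF t0] by auto
  next
    fix t :: real assume t: "t \<in> {0..1}"
    obtain \<epsilon>1 where \<epsilon>1: "\<epsilon>1 > 0" "\<forall>s\<in>{0..1}. \<bar>s - t\<bar> < \<epsilon>1 \<longrightarrow> same_germ X (\<Gamma> s) (F s) (F t)"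
      using UF(3) t by blast
    obtain \<epsilon>2 where \<epsilon>2: "\<epsilon>2 > 0" "\<And>s. s \<in> {0..1} \<Longrightarrow> \<bar>s - t\<bar> < \<epsilon>2 \<Longrightarrow> \<Gamma> s \<in> V t"
      using continuous_map_interval_near_openin[OF \<Gamma>(1) _ t] V[OF t] by blast
    show "\<exists>\<epsilon>>0. \<forall>s\<in>{0..1}. \<bar>s - t\<bar> < \<epsilon> \<longrightarrow>
        \<gamma> s \<in> p ` V t \<and> same_germ euclidean (\<gamma> s) (F s \<circ> inv_into (V s) p) (F t \<circ> inv_into (V t) p)"
    proof (intro exI[of _ "min \<epsilon>1 \<epsilon>2"] conjI ballI impI)
      show "min \<epsilon>1 \<epsilon>2 > 0" using \<epsilon>1 \<epsilon>2 by simp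
      fix s assume s: "s \<in> {0..1}" "\<bar>s - t\<bar> < min \<epsilon>1 \<epsilon>2"
      have sV: "\<Gamma> s \<in> V t" using \<epsilon>2 s by simp
      then show "\<gamma> s \<in> p ` V t" using \<Gamma>(2)[OF s(1)] by (metis image_eqI)
      obtain W where W: "openin X W" "\<Gamma> s \<in> W" "\<forall>y\<in>W. F s y = F t y"
        using \<epsilon>1 s unfolding same_germ_def by auto
      have "same_germ euclidean (p (\<Gamma> s)) (F s \<circ> inv_into (V s) p) (F t \<circ> inv_into (V t) p)"
        by (rule same_germ_in_chart[of X "V s" p "W \<inter> V t"])
          (use V[OF s(1)] V[OF t] W sV in \<open>auto simp: inv_into_f_f\<close>)
      then show "same_germ euclidean (\<gamma> s) (F s \<circ> inv_into (V s) p) (F t \<circ> inv_into (V t) p)"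
        using \<Gamma>(2)[OF s(1)] by simp
    qed
  qed
qed

theorem proposition3p14:
  fixes \<Omega> :: "real \<Rightarrow> complex set" and X :: "'a topology" and p :: "'a \<Rightarrow> complex"
    and o0 :: 'a and \<phi> :: "complex \<Rightarrow> complex" and r :: real
  assumes "dfs \<Omega>"
    and "universal_endless \<Omega> X p o0"
    and "r > 0" and "\<phi> holomorphic_on ball 0 r"
  shows "(omega_continuable \<Omega> \<phi>
            \<longleftrightarrow> (\<forall>\<Gamma>. continuous_map (top_of_set {0..1}) X \<Gamma> \<and> \<Gamma> 0 = o0
                   \<longrightarrow> continuable_along X p (\<phi> \<circ> p) \<Gamma>))
       \<and> (omega_continuable \<Omega> \<phi>
            \<longleftrightarrow> (\<exists>F. holo_on_surface X p (topspace X) F \<and> same_germ X o0 F (\<phi> \<circ> p)))"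
  \<comment> \<open>\<open>dfs \<Omega>\<close> is only needed for the existence of \<open>X\<^sub>\<Omega>\<close>, which is assumed here.\<close>
proof -
  let ?i = "omega_continuable \<Omega> \<phi>"
  let ?ii = "\<forall>\<Gamma>. continuous_map (top_of_set {0..1}) X \<Gamma> \<and> \<Gamma> 0 = o0 \<longrightarrow> continuable_along X p (\<phi> \<circ> p) \<Gamma>"
  let ?iii = "\<exists>F. holo_on_surface X p (topspace X) F \<and> same_germ X o0 F (\<phi> \<circ> p)"
  have "?i \<Longrightarrow> ?iii"
    by (rule omega_continuable_imp_global_extension[OF assms(2-4)])
  moreover have "?iii \<Longrightarrow> ?ii"
  proof (intro allI impI)
    fix \<Gamma> :: "real \<Rightarrow> 'a" assume ?iii and "continuous_map (top_of_set {0..1}) X \<Gamma> \<and> \<Gamma> 0 = o0"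
    then show "continuable_along X p (\<phi> \<circ> p) \<Gamma>"
      using continuable_along_of_global_extension[of X p _ \<Gamma>] by auto
  qed
  moreover have "?ii \<Longrightarrow> ?i"
    unfolding omega_continuable_def
  proof (intro allI impI)
    fix \<gamma> assume ii: ?ii and "allowed_path \<Omega> \<gamma>"
    then obtain \<Gamma> where "continuous_map (top_of_set {0..1}) X \<Gamma>" "\<Gamma> 0 = o0" "\<forall>t\<in>{0..1}. p (\<Gamma> t) = \<gamma> t"
      using assms(2) unfolding universal_endless_def endless_surface_def by blast
    with ii show "continuable_along euclidean id \<phi> \<gamma>"
      using continuable_along_projection[of X \<Gamma> p \<gamma> \<phi>] by blast
  qed
  ultimately show ?thesis by blast
qed

end
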